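(* As solutions to the system $S_1=S_2=S_3=T_1=T_2=T_3=0$ (with $S_i,T_i$ as defined in the context), the functions $r,a_1,a_2,b_3$ cannot depend on jet coordinates other than $t,x,u,u_x,u_{xx}$, whereas the functions $b_1,b_2$ cannot depend on jet coordinates other than $t,x,u,u_x,u_{xx},u_{xxx}$.
   Context: Consider a second order scalar evolution equation $u_t = F(t,x,u,u_x,u_{xx})$ with $\partial F/\partial u_{xx} \ne 0$, on its equation manifold with jet coordinates $t,x,u,u_x,u_{xx},u_{xxx},\dots$ and total derivatives $D_x, D_t$. Suppose it has an $\mathfrak{sl}_2$-valued zero-curvature representation $A\,dx + B\,dt$, i.e. $D_t A - D_x B + [A,B] = 0$ on the equation, with characteristic matrix $R$ in the semisimple case: after gauge, $R=\mathrm{diag}(r,-r)$ and $A = \begin{pmatrix} a_1 & a_2 \\ a_2 & -a_1\end{pmatrix}$, $B = \begin{pmatrix} b_1 & b_2+b_3 \\ b_2-b_3 & -b_1\end{pmatrix}$, with $a_2 \ne 0$. The zero-curvature condition and the characteristic-matrix equation then read $S_i = 0 = T_i$, $i=1,2,3$, where $S_1 = -D_t a_1 + D_x b_1 + 2 a_2 b_3$, $S_2 = -D_t a_2 + D_x b_2 - 2 a_1 b_3$, $S_3 = D_x b_3 + 2 a_2 b_1 - 2 a_1 b_2$, $T_1 = -D_t r - \frac{\partial F}{\partial u} r + D_x(\frac{\partial F}{\partial u_x} r) - D_x^2(\frac{\partial F}{\partial u_{xx}} r) - 4 \frac{\partial F}{\partial u_{xx}} r a_2^2$, $T_2 = -b_3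 + 2 \frac{\partial F}{\partial u_{xx}} a_1 a_2$, $T_3 = -b_2 + \frac{\partial F}{\partial u_x} a_2 - 2 D_x(\frac{\partial F}{\partial u_{xx}}) a_2 - 2 \frac{D_x r}{r} \frac{\partial F}{\partial u_{xx}} a_2 - \frac{\partial F}{\partial u_{xx}} D_x a_2$. *)

theory Defs
  imports "HOL-Analysis.Analysis"
begin

text \<open>A point of the (infinite) jet space of the equation manifold is given by
  coordinates t, x and the sequence w, where w k is the jet coordinate
  u_{x...x} (k times x); so w 0 = u, w 1 = u_x, w 2 = u_xx, w 3 = u_xxx, ...\<close>

type_synonym dfun = "real \<Rightarrow> real \<Rightarrow> (nat \<Rightarrow> real) \<Rightarrow> real"

definition depends_upto :: "nat \<Rightarrow> dfun \<Rightarrow> bool" where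
  "depends_upto N f \<longleftrightarrow>
     (\<forall>t x w w'. (\<forall>k\<le>N. w k = w' k) \<longrightarrow> f t x w = f t x w')"

datatype jvar = T | X | U nat

definition pd :: "jvar \<Rightarrow> dfun \<Rightarrow> dfun" where
  "pd v f t x w = (case v of
      T \<Rightarrow> deriv (\<lambda>s. f s x w) t
    | X \<Rightarrow> deriv (\<lambda>s. f t s w) x
    | U k \<Rightarrow> deriv (\<lambda>s. f t x (w(k := s))) (w k))"

definition pdiffble :: "jvar \<Rightarrow> dfun \<Rightarrow> real \<Rightarrow> real \<Rightarrow> (nat \<Rightarrow> real) \<Rightarrow> bool" where
  "pdiffble v f t x w = (case v of
      T \<Rightarrow> (\<lambda>s. f s x w) differentiable (at t)
    | X \<Rightarrow> (\<lambda>s. f t s w) differentiable (at x)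
    | U k \<Rightarrow> (\<lambda>s. f t x (w(k := s))) differentiable (at (w k)))"

definition smooth_dfun :: "dfun \<Rightarrow> bool" where
  "smooth_dfun f \<longleftrightarrow> (\<exists>N. depends_upto N f) \<and>
     (\<forall>vs. continuous_on UNIV (\<lambda>(t, x, w). foldr pd vs f t x w) \<and>
            (\<forall>v t x w. pdiffble v (foldr pd vs f) t x w))"

definition dord :: "dfun \<Rightarrow> nat" where
  "dord f = (LEAST N. depends_upto N f)"

definition Dx :: "dfun \<Rightarrow> dfun" where
  "Dx f t x w = pd X f t x w + (\<Sum>k\<le>dord f. w (Suc k) * pd (U k) f t x w)"

text \<open>Total t-derivative D_t on the equation manifold of u_t = F:
  u_t is replaced by F, and u_{t x..x} (k times) by D_x^k F.\<close>
definition Dt :: "dfun \<Rightarrow> dfun \<Rightarrow> dfun" where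
  "Dt F f t x w = pd T f t x w + (\<Sum>k\<le>dord f. (Dx ^^ k) F t x w * pd (U k) f t x w)"

end

theory Submission
  imports Defs
begin

(*
  Descending induction on the order.  Suppose r, a1, a2 depend on the jet coordinates only up
  to u_(m+1), for some m >= 2.  Then T1, S2 and S1 are affine in u_(m+3), and their coefficients
  of u_(m+3) are -2 F_uxx times the u_(m+1)-derivatives of r, a2 and a1 respectively: in T1 both
  D_t r and D_x^2 (F_uxx r) contribute, in S2 and S1 the terms D_t a_i and D_x b_i, once b2 and
  b1 are eliminated through T3 and S3.  As F_uxx never vanishes, these derivatives vanish and the
  order drops to m.  This has to be done for r first (so that b2 is of order m + 1), then for a2
  (so that D_x b3 is the only source of u_(m+2) in b1), then for a1.  Finally T2, T3 and S3
  express b3, b2, b1 through r, a1, a2 and their first x-derivatives.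
*)

section \<open>Differential functions of bounded order\<close>

lemma depends_upto_mono: "depends_upto N f \<Longrightarrow> N \<le> M \<Longrightarrow> depends_upto M f"
  unfolding depends_upto_def by (meson order_trans)

lemma depends_upto_const: "depends_upto N (\<lambda>t x w. c)"
  unfolding depends_upto_def by simp

lemma depends_upto_jet: "k \<le> N \<Longrightarrow> depends_upto N (\<lambda>t x w. w k)"
  unfolding depends_upto_def by simp

lemma depends_upto_add:
  "depends_upto N f \<Longrightarrow> depends_upto N g \<Longrightarrow> depends_upto N (\<lambda>t x w. f t x w + g t x w)"
  unfolding depends_upto_def by metis

lemma depends_upto_diff:
  "depends_upto N f \<Longrightarrow> depends_upto N g \<Longrightarrow> depends_upto N (\<lambda>t x w. f t x w - g t x w)"
  unfolding depends_upto_def by metis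

lemma depends_upto_mult:
  "depends_upto N f \<Longrightarrow> depends_upto N g \<Longrightarrow> depends_upto N (\<lambda>t x w. f t x w * g t x w)"
  unfolding depends_upto_def by metis

lemma depends_upto_divide:
  "depends_upto N f \<Longrightarrow> depends_upto N g \<Longrightarrow> depends_upto N (\<lambda>t x w. f t x w / g t x w)"
  unfolding depends_upto_def by metis

lemma depends_upto_uminus: "depends_upto N f \<Longrightarrow> depends_upto N (\<lambda>t x w. - f t x w)"
  unfolding depends_upto_def by metis

lemma depends_upto_power: "depends_upto N f \<Longrightarrow> depends_upto N (\<lambda>t x w. f t x w ^ k)"
  unfolding depends_upto_def by metis

lemma depends_upto_sum:
  "(\<And>k. k \<in> A \<Longrightarrow> depends_upto N (g k)) \<Longrightarrow> depends_upto N (\<lambda>t x w. \<Sum>k\<in>A. g k t x w)"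
  unfolding depends_upto_def by (metis (no_types, lifting) sum.cong)

lemmas depends_upto_intros = depends_upto_const depends_upto_jet depends_upto_add
  depends_upto_diff depends_upto_uminus depends_upto_mult depends_upto_divide depends_upto_power
  depends_upto_sum

lemma depends_upto_upd: "depends_upto N f \<Longrightarrow> N < k \<Longrightarrow> f t x (w(k := s)) = f t x w"
  unfolding depends_upto_def by simp

lemma pd_U_eq_0:
  assumes "depends_upto N f" "N < k"
  shows "pd (U k) f t x w = 0"
  using depends_upto_upd[OF assms] by (simp add: pd_def)

lemma depends_upto_pd:
  assumes f: "depends_upto N f"
  shows "depends_upto N (pd v f)"
  unfolding depends_upto_def
proof (intro allI impI)
  fix t x and w w' :: "nat \<Rightarrow> real"
  assume eq: "\<forall>k\<le>N. w k = w' k"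
  have agree: "f t' x' w = f t' x' w'" for t' x'
    using f eq unfolding depends_upto_def by blast
  have agree_upd: "(\<lambda>s. f t x (w(k := s))) = (\<lambda>s. f t x (w'(k := s)))" if "k \<le> N" for k
    using f eq that unfolding depends_upto_def by auto
  show "pd v f t x w = pd v f t x w'"
  proof (cases v)
    case (U k)
    show ?thesis
    proof (cases "k \<le> N")
      case True
      then show ?thesis using U eq agree_upd by (simp add: pd_def)
    next
      case False
      then show ?thesis using U pd_U_eq_0[OF f] by simp
    qed
  qed (simp_all add: pd_def agree)
qed

lemma pd_U_mult_left:
  assumes "depends_upto m c" "m < k" "pdiffble (U k) g t x w"
  shows "pd (U k) (\<lambda>t x w. c t x w * g t x w) t x w = c t x w * pd (U k) g t x w"
proof -
  have "pd (U k) (\<lambda>t x w. c t x w * g t x w) t x w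
      = deriv (\<lambda>s. c t x w * g t x (w(k := s))) (w k)"
    using depends_upto_upd[OF assms(1,2)] by (simp add: pd_def)
  also have "\<dots> = c t x w * pd (U k) g t x w"
  proof (rule DERIV_imp_deriv, rule DERIV_cmult)
    show "((\<lambda>s. g t x (w(k := s))) has_real_derivative pd (U k) g t x w) (at (w k))"
      using assms(3) by (simp add: pdiffble_def pd_def DERIV_deriv_iff_real_differentiable)
  qed
  finally show ?thesis .
qed

lemma depends_upto_lower:
  assumes f: "depends_upto (Suc m) f"
    and diff: "\<forall>t x w. pdiffble (U (Suc m)) f t x w"
    and flat: "\<forall>t x w. pd (U (Suc m)) f t x w = 0"
  shows "depends_upto m f"
  unfolding depends_upto_def
proof (intro allI impI)
  fix t x and w w' :: "nat \<Rightarrow> real"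
  assume eq: "\<forall>k\<le>m. w k = w' k"
  let ?g = "\<lambda>s. f t x (w(Suc m := s))"
  have "(?g has_real_derivative 0) (at s)" for s
    using diff[rule_format, of t x "w(Suc m := s)"] flat[rule_format, of t x "w(Suc m := s)"]
    by (simp add: pdiffble_def pd_def) (metis DERIV_deriv_iff_real_differentiable)
  then have "?g (w (Suc m)) = ?g (w' (Suc m))"
    by (intro DERIV_isconst_all) blast
  moreover have "?g (w' (Suc m)) = f t x w'"
    using f eq unfolding depends_upto_def by (auto simp: le_Suc_eq)
  ultimately show "f t x w = f t x w'" by simp
qed

lemma dord_le: "depends_upto M f \<Longrightarrow> dord f \<le> M"
  unfolding dord_def by (rule Least_le)

lemma depends_upto_dord: "depends_upto M f \<Longrightarrow> depends_upto (dord f) f"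
  unfolding dord_def by (rule LeastI)

lemma sum_pd_dord_eq:
  assumes "depends_upto M f"
  shows "(\<Sum>k\<le>dord f. c k * pd (U k) f t x w) = (\<Sum>k\<le>M. c k * pd (U k) f t x w)"
  by (rule sum.mono_neutral_left)
    (use dord_le[OF assms] pd_U_eq_0[OF depends_upto_dord[OF assms]] in auto)

lemma Dx_expand:
  "depends_upto M f \<Longrightarrow> Dx f t x w = pd X f t x w + (\<Sum>k\<le>M. w (Suc k) * pd (U k) f t x w)"
  unfolding Dx_def by (simp add: sum_pd_dord_eq)

lemma Dt_expand:
  "depends_upto M f \<Longrightarrow>
     Dt F f t x w = pd T f t x w + (\<Sum>k\<le>M. (Dx ^^ k) F t x w * pd (U k) f t x w)"
  unfolding Dt_def by (simp add: sum_pd_dord_eq)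

section \<open>Differential functions affine in the top jet coordinate\<close>

definition quasilinear :: "nat \<Rightarrow> dfun \<Rightarrow> dfun \<Rightarrow> bool" where
  "quasilinear m E A \<longleftrightarrow>
     depends_upto m A \<and> depends_upto m (\<lambda>t x w. E t x w - A t x w * w (Suc m))"

lemma quasilinearI:
  assumes "depends_upto m A" "depends_upto m R"
    and "\<And>t x w. E t x w = A t x w * w (Suc m) + R t x w"
  shows "quasilinear m E A"
  using assms unfolding quasilinear_def by simp

lemma quasilinear_add:
  assumes "quasilinear m E A" "quasilinear m E' A'"
  shows "quasilinear m (\<lambda>t x w. E t x w + E' t x w) (\<lambda>t x w. A t x w + A' t x w)"
proof (rule quasilinearI)
  show "depends_upto m (\<lambda>t x w. A t x w + A' t x w)"
    "depends_upto m (\<lambda>t x w. (E t x w - A t x w * w (Suc m)) + (E' t x w - A' t x w * w (Suc m)))"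
    using assms unfolding quasilinear_def by (auto intro: depends_upto_add)
qed (simp add: algebra_simps)

lemma quasilinear_diff:
  assumes "quasilinear m E A" "quasilinear m E' A'"
  shows "quasilinear m (\<lambda>t x w. E t x w - E' t x w) (\<lambda>t x w. A t x w - A' t x w)"
proof (rule quasilinearI)
  show "depends_upto m (\<lambda>t x w. A t x w - A' t x w)"
    "depends_upto m (\<lambda>t x w. (E t x w - A t x w * w (Suc m)) - (E' t x w - A' t x w * w (Suc m)))"
    using assms unfolding quasilinear_def by (auto intro: depends_upto_diff)
qed (simp add: algebra_simps)

lemma quasilinear_uminus:
  assumes "quasilinear m E A"
  shows "quasilinear m (\<lambda>t x w. - E t x w) (\<lambda>t x w. - A t x w)"
proof (rule quasilinearI)
  show "depends_upto m (\<lambda>t x w. - A t x w)"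
    "depends_upto m (\<lambda>t x w. - (E t x w - A t x w * w (Suc m)))"
    using assms unfolding quasilinear_def by (simp_all only: depends_upto_uminus)
qed (simp add: algebra_simps)

lemma quasilinear_add_depends_upto:
  assumes "quasilinear m E A" "depends_upto m G"
  shows "quasilinear m (\<lambda>t x w. E t x w + G t x w) A"
proof (rule quasilinearI)
  show "depends_upto m A" "depends_upto m (\<lambda>t x w. (E t x w - A t x w * w (Suc m)) + G t x w)"
    using assms unfolding quasilinear_def by (auto intro: depends_upto_add)
qed (simp add: algebra_simps)

lemma quasilinear_diff_depends_upto:
  assumes "quasilinear m E A" "depends_upto m G"
  shows "quasilinear m (\<lambda>t x w. E t x w - G t x w) A"
proof (rule quasilinearI)
  show "depends_upto m A" "depends_upto m (\<lambda>t x w. (E t x w - A t x w * w (Suc m)) - G t x w)"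
    using assms unfolding quasilinear_def by (auto intro: depends_upto_diff)
qed (simp add: algebra_simps)

lemma depends_upto_diff_quasilinear:
  assumes "depends_upto m G" "quasilinear m E A"
  shows "quasilinear m (\<lambda>t x w. G t x w - E t x w) (\<lambda>t x w. - A t x w)"
proof (rule quasilinearI)
  have dA: "depends_upto m A" and dR: "depends_upto m (\<lambda>t x w. E t x w - A t x w * w (Suc m))"
    using assms(2) unfolding quasilinear_def by auto
  show "depends_upto m (\<lambda>t x w. - A t x w)"
    using dA by (rule depends_upto_uminus)
  show "depends_upto m (\<lambda>t x w. G t x w - (E t x w - A t x w * w (Suc m)))"
    using assms(1) dR by (rule depends_upto_diff)
qed (simp add: algebra_simps)

lemma quasilinear_mult_left:
  assumes "depends_upto m c" "quasilinear m E A"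
  shows "quasilinear m (\<lambda>t x w. c t x w * E t x w) (\<lambda>t x w. c t x w * A t x w)"
proof (rule quasilinearI)
  show "depends_upto m (\<lambda>t x w. c t x w * A t x w)"
    "depends_upto m (\<lambda>t x w. c t x w * (E t x w - A t x w * w (Suc m)))"
    using assms unfolding quasilinear_def by (auto intro: depends_upto_mult)
qed (simp add: algebra_simps)

lemma quasilinear_divide:
  assumes "quasilinear m E A" "depends_upto m c"
  shows "quasilinear m (\<lambda>t x w. E t x w / c t x w) (\<lambda>t x w. A t x w / c t x w)"
proof (rule quasilinearI)
  show "depends_upto m (\<lambda>t x w. A t x w / c t x w)"
    "depends_upto m (\<lambda>t x w. (E t x w - A t x w * w (Suc m)) / c t x w)"
    using assms unfolding quasilinear_def by (auto intro: depends_upto_divide)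
qed (simp add: diff_divide_distrib)

lemma quasilinear_imp_depends_upto:
  assumes "quasilinear m E A"
  shows "depends_upto (Suc m) E"
proof -
  have dA: "depends_upto m A" and dR: "depends_upto m (\<lambda>t x w. E t x w - A t x w * w (Suc m))"
    using assms unfolding quasilinear_def by auto
  have "depends_upto (Suc m) (\<lambda>t x w. (E t x w - A t x w * w (Suc m)) + A t x w * w (Suc m))"
    by (intro depends_upto_add depends_upto_mult depends_upto_jet
        depends_upto_mono[OF dR] depends_upto_mono[OF dA]) auto
  then show ?thesis by simp
qed

lemma quasilinear_pd:
  assumes "quasilinear m E A"
  shows "pd (U (Suc m)) E t x w = A t x w"
proof -
  let ?R = "\<lambda>t x w. E t x w - A t x w * w (Suc m)"
  have dA: "depends_upto m A" and dR: "depends_upto m ?R"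
    using assms unfolding quasilinear_def by auto
  have "E t x (w(Suc m := s)) = A t x w * s + ?R t x w" for s
    using depends_upto_upd[OF dA, of "Suc m" t x w s] depends_upto_upd[OF dR, of "Suc m" t x w s]
    by simp
  then have "pd (U (Suc m)) E t x w = deriv (\<lambda>s. A t x w * s + ?R t x w) (w (Suc m))"
    by (simp add: pd_def)
  also have "\<dots> = A t x w"
    by (rule DERIV_imp_deriv) (auto intro!: derivative_eq_intros)
  finally show ?thesis .
qed

lemma quasilinear_coeff_eq_0:
  assumes "quasilinear m E A" "\<forall>t x w. E t x w = 0"
  shows "A t x w = 0"
proof -
  have "E = (\<lambda>t x w. 0)"
    using assms(2) by (intro ext) simp
  then show ?thesis
    using quasilinear_pd[OF assms(1), of t x w] by (simp add: pd_def)
qed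

lemma quasilinear_Dx:
  assumes f: "depends_upto m f"
  shows "quasilinear m (Dx f) (pd (U m) f)"
proof (rule quasilinearI)
  show "depends_upto m (pd (U m) f)"
    using f by (rule depends_upto_pd)
  show "depends_upto m (\<lambda>t x w. pd X f t x w + (\<Sum>k<m. w (Suc k) * pd (U k) f t x w))"
    by (intro depends_upto_intros depends_upto_pd[OF f]) auto
qed (simp add: Dx_expand[OF f] lessThan_Suc_atMost[symmetric])

lemma depends_upto_Dx: "depends_upto m f \<Longrightarrow> depends_upto (Suc m) (Dx f)"
  by (rule quasilinear_imp_depends_upto[OF quasilinear_Dx])

lemma quasilinear_Dx_Suc:
  assumes "quasilinear m E A"
  shows "quasilinear (Suc m) (Dx E) A"
proof -
  have "pd (U (Suc m)) E = A"
    using quasilinear_pd[OF assms] by (intro ext)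
  then show ?thesis
    using quasilinear_Dx[OF quasilinear_imp_depends_upto[OF assms]] by simp
qed

lemma depends_upto_Dx_pow: "depends_upto n F \<Longrightarrow> depends_upto (k + n) ((Dx ^^ k) F)"
  by (induction k) (auto intro: depends_upto_Dx)

lemma quasilinear_Dx_pow:
  "depends_upto n F \<Longrightarrow> quasilinear (k + n) ((Dx ^^ Suc k) F) (pd (U n) F)"
  by (induction k) (auto intro: quasilinear_Dx quasilinear_Dx_Suc)

lemma quasilinear_Dt:
  assumes F: "depends_upto n F" and f: "depends_upto (Suc k) f" and n: "1 \<le> n"
  shows "quasilinear (k + n) (Dt F f) (\<lambda>t x w. pd (U (Suc k)) f t x w * pd (U n) F t x w)"
proof -
  have f': "depends_upto (k + n) f"
    by (rule depends_upto_mono[OF f]) (use n in simp)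
  have "Dt F f = (\<lambda>t x w. pd (U (Suc k)) f t x w * (Dx ^^ Suc k) F t x w
      + (pd T f t x w + (\<Sum>j\<le>k. (Dx ^^ j) F t x w * pd (U j) f t x w)))"
    by (intro ext) (simp add: Dt_expand[OF f] algebra_simps)
  moreover have "depends_upto (k + n)
      (\<lambda>t x w. pd T f t x w + (\<Sum>j\<le>k. (Dx ^^ j) F t x w * pd (U j) f t x w))"
    by (intro depends_upto_intros depends_upto_pd[OF f'])
      (auto intro: depends_upto_mono[OF depends_upto_Dx_pow[OF F]])
  moreover have "quasilinear (k + n) (\<lambda>t x w. pd (U (Suc k)) f t x w * (Dx ^^ Suc k) F t x w)
      (\<lambda>t x w. pd (U (Suc k)) f t x w * pd (U n) F t x w)"
    by (intro quasilinear_mult_left quasilinear_Dx_pow F depends_upto_pd f')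
  ultimately show ?thesis
    by (simp add: quasilinear_add_depends_upto)
qed

section \<open>The zero-curvature system\<close>

definition S\<^sub>1 :: "dfun \<Rightarrow> dfun \<Rightarrow> dfun \<Rightarrow> dfun \<Rightarrow> dfun \<Rightarrow> dfun" where
  "S\<^sub>1 F a1 a2 b1 b3 t x w = - Dt F a1 t x w + Dx b1 t x w + 2 * a2 t x w * b3 t x w"

definition S\<^sub>2 :: "dfun \<Rightarrow> dfun \<Rightarrow> dfun \<Rightarrow> dfun \<Rightarrow> dfun \<Rightarrow> dfun" where
  "S\<^sub>2 F a1 a2 b2 b3 t x w = - Dt F a2 t x w + Dx b2 t x w - 2 * a1 t x w * b3 t x w"

definition S\<^sub>3 :: "dfun \<Rightarrow> dfun \<Rightarrow> dfun \<Rightarrow> dfun \<Rightarrow> dfun \<Rightarrow> dfun" where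
  "S\<^sub>3 a1 a2 b1 b2 b3 t x w = Dx b3 t x w + 2 * a2 t x w * b1 t x w - 2 * a1 t x w * b2 t x w"

definition T\<^sub>1 :: "dfun \<Rightarrow> dfun \<Rightarrow> dfun \<Rightarrow> dfun" where
  "T\<^sub>1 F r a2 t x w = - Dt F r t x w - pd (U 0) F t x w * r t x w
     + Dx (\<lambda>t x w. pd (U 1) F t x w * r t x w) t x w
     - Dx (Dx (\<lambda>t x w. pd (U 2) F t x w * r t x w)) t x w
     - 4 * pd (U 2) F t x w * r t x w * (a2 t x w)\<^sup>2"

definition T\<^sub>2 :: "dfun \<Rightarrow> dfun \<Rightarrow> dfun \<Rightarrow> dfun \<Rightarrow> dfun" where
  "T\<^sub>2 F a1 a2 b3 t x w = - b3 t x w + 2 * pd (U 2) F t x w * a1 t x w * a2 t x w"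

definition T\<^sub>3 :: "dfun \<Rightarrow> dfun \<Rightarrow> dfun \<Rightarrow> dfun \<Rightarrow> dfun" where
  "T\<^sub>3 F r a2 b2 t x w = - b2 t x w + pd (U 1) F t x w * a2 t x w
     - 2 * Dx (pd (U 2) F) t x w * a2 t x w
     - 2 * (Dx r t x w / r t x w) * pd (U 2) F t x w * a2 t x w
     - pd (U 2) F t x w * Dx a2 t x w"

lemma b3_eq:
  assumes "\<forall>t x w. T\<^sub>2 F a1 a2 b3 t x w = 0"
  shows "b3 = (\<lambda>t x w. 2 * pd (U 2) F t x w * a2 t x w * a1 t x w)"
  using assms by (intro ext) (simp add: T\<^sub>2_def algebra_simps)

lemma b2_eq:
  assumes "\<forall>t x w. T\<^sub>3 F r a2 b2 t x w = 0"
  shows "b2 = (\<lambda>t x w. pd (U 1) F t x w * a2 t x w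
     - 2 * Dx (pd (U 2) F) t x w * a2 t x w
     - 2 * (Dx r t x w / r t x w) * pd (U 2) F t x w * a2 t x w
     - pd (U 2) F t x w * Dx a2 t x w)"
  using assms by (intro ext) (simp add: T\<^sub>3_def algebra_simps)

lemma b1_eq:
  assumes "\<forall>t x w. S\<^sub>3 a1 a2 b1 b2 b3 t x w = 0" "\<forall>t x w. a2 t x w \<noteq> 0"
  shows "b1 = (\<lambda>t x w. (2 * a1 t x w * b2 t x w - Dx b3 t x w) / (2 * a2 t x w))"
  using assms by (intro ext) (simp add: S\<^sub>3_def field_simps)

lemma depends_upto_b3:
  assumes "\<forall>t x w. T\<^sub>2 F a1 a2 b3 t x w = 0" "depends_upto 2 F" "2 \<le> m"
    and "depends_upto m a1" "depends_upto m a2"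
  shows "depends_upto m b3"
  unfolding b3_eq[OF assms(1)]
  by (intro depends_upto_intros depends_upto_mono[OF depends_upto_pd[OF assms(2)] assms(3)]
      assms(4,5))

lemma depends_upto_b2:
  assumes "\<forall>t x w. T\<^sub>3 F r a2 b2 t x w = 0" "depends_upto 2 F" "2 \<le> m"
    and "depends_upto m r" "depends_upto m a2"
  shows "depends_upto (Suc m) b2"
proof -
  have F: "depends_upto m (pd v F)" for v
    using depends_upto_pd[OF assms(2)] assms(3) by (rule depends_upto_mono)
  show ?thesis
    unfolding b2_eq[OF assms(1)]
    by (intro depends_upto_intros depends_upto_Dx F assms(4,5) depends_upto_mono[OF F]
        depends_upto_mono[OF assms(4)] depends_upto_mono[OF assms(5)]) auto
qed

lemma depends_upto_b1:
  assumes "\<forall>t x w. S\<^sub>3 a1 a2 b1 b2 b3 t x w = 0" "\<forall>t x w. a2 t x w \<noteq> 0"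
    and "depends_upto (Suc m) a1" "depends_upto (Suc m) a2" "depends_upto (Suc m) b2"
    and "depends_upto m b3"
  shows "depends_upto (Suc m) b1"
  unfolding b1_eq[OF assms(1,2)]
  by (intro depends_upto_intros depends_upto_Dx assms(3-))

lemma T1_reduces_order:
  assumes F: "depends_upto 2 F" and F_nondeg: "\<forall>t x w. pd (U 2) F t x w \<noteq> 0"
    and m: "2 \<le> m" and r: "depends_upto (Suc m) r" and a2: "depends_upto (Suc m) a2"
    and r_diff: "\<forall>t x w. pdiffble (U (Suc m)) r t x w"
    and T1: "\<forall>t x w. T\<^sub>1 F r a2 t x w = 0"
  shows "depends_upto m r"
proof (rule depends_upto_lower[OF r r_diff], intro allI)
  fix t x w
  let ?F2r = "\<lambda>t x w. pd (U 2) F t x w * r t x w"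
  have F': "depends_upto (Suc m) (pd v F)" for v
    using depends_upto_pd[OF F] by (rule depends_upto_mono) (use m in simp)
  have Dt_r: "quasilinear (Suc (Suc m)) (Dt F r)
      (\<lambda>t x w. pd (U (Suc m)) r t x w * pd (U 2) F t x w)"
    using quasilinear_Dt[OF F r] by (simp add: add_2_eq_Suc')
  have DxDx_F2r: "quasilinear (Suc (Suc m)) (Dx (Dx ?F2r)) (pd (U (Suc m)) ?F2r)"
    by (intro quasilinear_Dx_Suc quasilinear_Dx depends_upto_mult F' r)
  have lower: "depends_upto (Suc (Suc m)) (\<lambda>t x w. pd (U 0) F t x w * r t x w)"
    "depends_upto (Suc (Suc m)) (Dx (\<lambda>t x w. pd (U 1) F t x w * r t x w))"
    "depends_upto (Suc (Suc m)) (\<lambda>t x w. 4 * pd (U 2) F t x w * r t x w * (a2 t x w)\<^sup>2)"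
    by (intro depends_upto_intros depends_upto_Dx depends_upto_mono[OF F'] depends_upto_mono[OF r]
        depends_upto_mono[OF a2] F' r; simp)+
  have T1_ql: "quasilinear (Suc (Suc m)) (T\<^sub>1 F r a2)
      (\<lambda>t x w. - (pd (U (Suc m)) r t x w * pd (U 2) F t x w) - pd (U (Suc m)) ?F2r t x w)"
    unfolding T\<^sub>1_def[abs_def]
    by (rule quasilinear_diff_depends_upto[OF quasilinear_diff[OF quasilinear_add_depends_upto[OF
          quasilinear_diff_depends_upto[OF quasilinear_uminus[OF Dt_r] lower(1)] lower(2)]
          DxDx_F2r] lower(3)])
  have "pd (U (Suc m)) ?F2r t x w = pd (U 2) F t x w * pd (U (Suc m)) r t x w"
    using depends_upto_pd[OF F] m r_diff by (intro pd_U_mult_left) auto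
  moreover note quasilinear_coeff_eq_0[OF T1_ql T1, of t x w]
  ultimately show "pd (U (Suc m)) r t x w = 0"
    using F_nondeg by (simp add: algebra_simps)
qed

lemma S2_reduces_order:
  assumes F: "depends_upto 2 F" and F_nondeg: "\<forall>t x w. pd (U 2) F t x w \<noteq> 0"
    and m: "2 \<le> m" and r: "depends_upto m r"
    and a1: "depends_upto (Suc m) a1" and a2: "depends_upto (Suc m) a2"
    and a2_diff: "\<forall>t x w. pdiffble (U (Suc m)) a2 t x w"
    and T2: "\<forall>t x w. T\<^sub>2 F a1 a2 b3 t x w = 0" and T3: "\<forall>t x w. T\<^sub>3 F r a2 b2 t x w = 0"
    and S2: "\<forall>t x w. S\<^sub>2 F a1 a2 b2 b3 t x w = 0"
  shows "depends_upto m a2"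
proof (rule depends_upto_lower[OF a2 a2_diff], intro allI)
  fix t x w
  have F': "depends_upto m (pd v F)" for v
    using depends_upto_pd[OF F] m by (rule depends_upto_mono)
  have b2_rest: "depends_upto (Suc m) (\<lambda>t x w. pd (U 1) F t x w * a2 t x w
      - 2 * Dx (pd (U 2) F) t x w * a2 t x w
      - 2 * (Dx r t x w / r t x w) * pd (U 2) F t x w * a2 t x w)"
    by (intro depends_upto_intros depends_upto_Dx depends_upto_mono[OF F'] depends_upto_mono[OF r]
        F' r a2) auto
  have b2_ql: "quasilinear (Suc m) b2 (\<lambda>t x w. - (pd (U 2) F t x w * pd (U (Suc m)) a2 t x w))"
    unfolding b2_eq[OF T3]
    by (intro depends_upto_diff_quasilinear[OF b2_rest] quasilinear_mult_left quasilinear_Dx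
        depends_upto_mono[OF F'] a2) simp
  have Dt_a2: "quasilinear (Suc (Suc m)) (Dt F a2)
      (\<lambda>t x w. pd (U (Suc m)) a2 t x w * pd (U 2) F t x w)"
    using quasilinear_Dt[OF F a2] by (simp add: add_2_eq_Suc')
  have a1_b3: "depends_upto (Suc (Suc m)) (\<lambda>t x w. 2 * a1 t x w * b3 t x w)"
    by (intro depends_upto_intros depends_upto_mono[OF a1]
        depends_upto_mono[OF depends_upto_b3[OF T2 F _ a1 a2]]) (use m in auto)
  have S2_ql: "quasilinear (Suc (Suc m)) (S\<^sub>2 F a1 a2 b2 b3)
      (\<lambda>t x w. - (pd (U (Suc m)) a2 t x w * pd (U 2) F t x w)
        + - (pd (U 2) F t x w * pd (U (Suc m)) a2 t x w))"
    unfolding S\<^sub>2_def[abs_def]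
    by (rule quasilinear_diff_depends_upto[OF quasilinear_add[OF quasilinear_uminus[OF Dt_a2]
          quasilinear_Dx_Suc[OF b2_ql]] a1_b3])
  show "pd (U (Suc m)) a2 t x w = 0"
    using quasilinear_coeff_eq_0[OF S2_ql S2, of t x w] F_nondeg by (simp add: algebra_simps)
qed

lemma S1_reduces_order:
  assumes F: "depends_upto 2 F" and F_nondeg: "\<forall>t x w. pd (U 2) F t x w \<noteq> 0"
    and a2_nz: "\<forall>t x w. a2 t x w \<noteq> 0"
    and m: "2 \<le> m" and r: "depends_upto m r"
    and a1: "depends_upto (Suc m) a1" and a2: "depends_upto m a2"
    and a1_diff: "\<forall>t x w. pdiffble (U (Suc m)) a1 t x w"
    and T2: "\<forall>t x w. T\<^sub>2 F a1 a2 b3 t x w = 0" and T3: "\<forall>t x w. T\<^sub>3 F r a2 b2 t x w = 0"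
    and S3: "\<forall>t x w. S\<^sub>3 a1 a2 b1 b2 b3 t x w = 0" and S1: "\<forall>t x w. S\<^sub>1 F a1 a2 b1 b3 t x w = 0"
  shows "depends_upto m a1"
proof (rule depends_upto_lower[OF a1 a1_diff], intro allI)
  fix t x w
  have F': "depends_upto m (pd v F)" for v
    using depends_upto_pd[OF F] m by (rule depends_upto_mono)
  have a2': "depends_upto (Suc m) a2"
    using a2 by (rule depends_upto_mono) simp
  have b3: "depends_upto (Suc m) b3"
    using depends_upto_b3[OF T2 F _ a1 a2'] m by simp
  have b2: "depends_upto (Suc m) b2"
    by (rule depends_upto_b2[OF T3 F m r a2])
  have "depends_upto m (\<lambda>t x w. 2 * pd (U 2) F t x w * a2 t x w)"
    by (intro depends_upto_intros F' a2)
  then have b3': "pd (U (Suc m)) b3 t x w = 2 * pd (U 2) F t x w * a2 t x w * pd (U (Suc m)) a1 t x w"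
    unfolding b3_eq[OF T2] by (rule pd_U_mult_left) (use a1_diff in auto)
  have b1_ql: "quasilinear (Suc m) b1 (\<lambda>t x w. - pd (U (Suc m)) b3 t x w / (2 * a2 t x w))"
    unfolding b1_eq[OF S3 a2_nz]
    by (intro quasilinear_divide depends_upto_diff_quasilinear quasilinear_Dx b3
        depends_upto_intros depends_upto_mono[OF a1] a2' b2) auto
  have Dt_a1: "quasilinear (Suc (Suc m)) (Dt F a1)
      (\<lambda>t x w. pd (U (Suc m)) a1 t x w * pd (U 2) F t x w)"
    using quasilinear_Dt[OF F a1] by (simp add: add_2_eq_Suc')
  have a2_b3: "depends_upto (Suc (Suc m)) (\<lambda>t x w. 2 * a2 t x w * b3 t x w)"
    by (intro depends_upto_intros depends_upto_mono[OF a2'] depends_upto_mono[OF b3]) auto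
  have S1_ql: "quasilinear (Suc (Suc m)) (S\<^sub>1 F a1 a2 b1 b3)
      (\<lambda>t x w. - (pd (U (Suc m)) a1 t x w * pd (U 2) F t x w)
        + - pd (U (Suc m)) b3 t x w / (2 * a2 t x w))"
    unfolding S\<^sub>1_def[abs_def]
    by (rule quasilinear_add_depends_upto[OF quasilinear_add[OF quasilinear_uminus[OF Dt_a1]
          quasilinear_Dx_Suc[OF b1_ql]] a2_b3])
  show "pd (U (Suc m)) a1 t x w = 0"
    using quasilinear_coeff_eq_0[OF S1_ql S1, of t x w] F_nondeg a2_nz
    by (simp add: b3' field_simps)
qed

lemma depends_upto_2_r_a1_a2:
  assumes F: "depends_upto 2 F" and F_nondeg: "\<forall>t x w. pd (U 2) F t x w \<noteq> 0"
    and a2_nz: "\<forall>t x w. a2 t x w \<noteq> 0"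
    and r_diff: "\<And>k. \<forall>t x w. pdiffble (U k) r t x w"
    and a1_diff: "\<And>k. \<forall>t x w. pdiffble (U k) a1 t x w"
    and a2_diff: "\<And>k. \<forall>t x w. pdiffble (U k) a2 t x w"
    and S1: "\<forall>t x w. S\<^sub>1 F a1 a2 b1 b3 t x w = 0" and S2: "\<forall>t x w. S\<^sub>2 F a1 a2 b2 b3 t x w = 0"
    and S3: "\<forall>t x w. S\<^sub>3 a1 a2 b1 b2 b3 t x w = 0" and T1: "\<forall>t x w. T\<^sub>1 F r a2 t x w = 0"
    and T2: "\<forall>t x w. T\<^sub>2 F a1 a2 b3 t x w = 0" and T3: "\<forall>t x w. T\<^sub>3 F r a2 b2 t x w = 0"
    and n: "2 \<le> n"
    and orders_n: "depends_upto n r" "depends_upto n a1" "depends_upto n a2"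
  shows "depends_upto 2 r \<and> depends_upto 2 a1 \<and> depends_upto 2 a2"
proof (rule inc_induct[OF n, where P = "\<lambda>k. depends_upto k r \<and> depends_upto k a1 \<and> depends_upto k a2"])
  show "depends_upto n r \<and> depends_upto n a1 \<and> depends_upto n a2"
    using orders_n by blast
next
  fix m assume m: "2 \<le> m"
    and "depends_upto (Suc m) r \<and> depends_upto (Suc m) a1 \<and> depends_upto (Suc m) a2"
  then have r': "depends_upto (Suc m) r" and a1': "depends_upto (Suc m) a1"
    and a2': "depends_upto (Suc m) a2"
    by auto
  have r: "depends_upto m r"
    using T1_reduces_order[OF F F_nondeg m r' a2' r_diff T1] .
  have a2: "depends_upto m a2"
    using S2_reduces_order[OF F F_nondeg m r a1' a2' a2_diff T2 T3 S2] .
  have a1: "depends_upto m a1"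
    using S1_reduces_order[OF F F_nondeg a2_nz m r a1' a2 a1_diff T2 T3 S3 S1] .
  show "depends_upto m r \<and> depends_upto m a1 \<and> depends_upto m a2"
    using r a1 a2 by blast
qed

lemma smooth_dfun_pdiffble: "smooth_dfun f \<Longrightarrow> \<forall>t x w. pdiffble v f t x w"
  unfolding smooth_dfun_def by (metis foldr.simps(1) id_apply)

lemma smooth_dfun_depends_upto: "smooth_dfun f \<Longrightarrow> \<exists>N. depends_upto N f"
  unfolding smooth_dfun_def by blast

theorem proposition3:
  fixes F r a1 a2 b1 b2 b3 :: dfun
  assumes F_smooth: "smooth_dfun F"
    and F_order: "depends_upto 2 F"
    and F_nondeg: "\<forall>t x w. pd (U 2) F t x w \<noteq> 0"
    and smooth: "smooth_dfun r" "smooth_dfun a1" "smooth_dfun a2"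
                "smooth_dfun b1" "smooth_dfun b2" "smooth_dfun b3"
    and r_nz: "\<forall>t x w. r t x w \<noteq> 0"
    and a2_nz: "\<forall>t x w. a2 t x w \<noteq> 0"
    and S1: "\<forall>t x w. - Dt F a1 t x w + Dx b1 t x w + 2 * a2 t x w * b3 t x w = 0"
    and S2: "\<forall>t x w. - Dt F a2 t x w + Dx b2 t x w - 2 * a1 t x w * b3 t x w = 0"
    and S3: "\<forall>t x w. Dx b3 t x w + 2 * a2 t x w * b1 t x w - 2 * a1 t x w * b2 t x w = 0"
    and T1: "\<forall>t x w. - Dt F r t x w - pd (U 0) F t x w * r t x w
               + Dx (\<lambda>t x w. pd (U 1) F t x w * r t x w) t x w
               - Dx (Dx (\<lambda>t x w. pd (U 2) F t x w * r t x w)) t x w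
               - 4 * pd (U 2) F t x w * r t x w * (a2 t x w)\<^sup>2 = 0"
    and T2: "\<forall>t x w. - b3 t x w + 2 * pd (U 2) F t x w * a1 t x w * a2 t x w = 0"
    and T3: "\<forall>t x w. - b2 t x w + pd (U 1) F t x w * a2 t x w
               - 2 * Dx (pd (U 2) F) t x w * a2 t x w
               - 2 * (Dx r t x w / r t x w) * pd (U 2) F t x w * a2 t x w
               - pd (U 2) F t x w * Dx a2 t x w = 0"
  shows "depends_upto 2 r \<and> depends_upto 2 a1 \<and> depends_upto 2 a2 \<and> depends_upto 2 b3
         \<and> depends_upto 3 b1 \<and> depends_upto 3 b2"
proof -
  note eqs = S1[folded S\<^sub>1_def] S2[folded S\<^sub>2_def] S3[folded S\<^sub>3_def]
    T1[folded T\<^sub>1_def] T2[folded T\<^sub>2_def] T3[folded T\<^sub>3_def]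
  obtain Nr Na1 Na2 where "depends_upto Nr r" "depends_upto Na1 a1" "depends_upto Na2 a2"
    using smooth_dfun_depends_upto smooth(1-3) by meson
  then have "depends_upto 2 r \<and> depends_upto 2 a1 \<and> depends_upto 2 a2"
    by (intro depends_upto_2_r_a1_a2[OF F_order F_nondeg a2_nz
          smooth(1-3)[THEN smooth_dfun_pdiffble] eqs, of "Nr + Na1 + Na2 + 2"])
      (auto elim: depends_upto_mono)
  then have r: "depends_upto 2 r" and a1: "depends_upto 2 a1" and a2: "depends_upto 2 a2"
    by auto
  have b3: "depends_upto 2 b3"
    using depends_upto_b3[OF eqs(5) F_order order_refl a1 a2] .
  have b2: "depends_upto 3 b2"
    using depends_upto_b2[OF eqs(6) F_order order_refl r a2] by simp
  have "depends_upto 3 b1"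
    using depends_upto_b1[OF eqs(3) a2_nz _ _ _ b3] a1 a2 b2 by (simp add: depends_upto_mono)
  then show ?thesis
    using r a1 a2 b3 b2 by blast
qed

end
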